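(* Let $\ell,m,n$ be positive integers with $\ell<n$, $m<n$, $\gcd(m,n)=1$. Then $\ell^+$ equals the number of $L$'s in $\hat{\mathcal{X}}$, $\ell^-$ equals the number of $L$'s in $\hat{\mathcal{Y}}$, and $\ell^++\ell^-=\ell$.
   Context: $\mathcal{S}=\mathcal{F}[\ell,m,n]$ is the $n$-periodic sequence with $\mathcal{S}_i=L$ if $im\bmod n<\ell$ and $R$ otherwise. $d\in\{1,\dots,n-1\}$ is the inverse of $m$ mod $n$. $\hat{\mathcal{X}}=\mathcal{S}_0\cdots\mathcal{S}_{n-d-1}$ and $\hat{\mathcal{Y}}=\mathcal{S}_{n-d}\cdots\mathcal{S}_{n-1}$. The left and right Farey roots of $\frac mn$ are the fractions $\frac{m^-}{n^-}<\frac{m^+}{n^+}$ with $m^\pm\ge0$, $n^\pm\ge1$, $m^-+m^+=m$, $n^-+n^+=n$, $m^+n^--m^-n^+=1$; $\ell^+=\lceil\ell n^+/n\rceil$ and $\ell^-=\lfloor\ell n^-/n\rfloor$. *)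

theory Defs
  imports Complex_Main
begin

datatype letter = L | R

definition F :: "nat \<Rightarrow> nat \<Rightarrow> nat \<Rightarrow> nat \<Rightarrow> letter" where
  "F l m n i = (if (i * m) mod n < l then L else R)"

definition countL :: "(nat \<Rightarrow> letter) \<Rightarrow> nat \<Rightarrow> nat \<Rightarrow> nat" where
  "countL S a b = card {i \<in> {a..<b}. S i = L}"

text \<open>The left and right Farey roots m^-/n^- < m^+/n^+ of m/n.\<close>
definition farey_roots :: "nat \<Rightarrow> nat \<Rightarrow> nat \<Rightarrow> nat \<Rightarrow> nat \<Rightarrow> nat \<Rightarrow> bool" where
  "farey_roots m n mm nm mp np \<longleftrightarrow>
     nm \<ge> 1 \<and> np \<ge> 1 \<and> mm + mp = m \<and> nm + np = n \<and>
     int mp * int nm - int mm * int np = 1 \<and>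
     real mm / real nm < real mp / real np"

end

theory Submission
  imports Defs "HOL-Number_Theory.Number_Theory"
begin

text \<open>
  The Farey determinant gives \<open>m\<^sup>+ n = m n\<^sup>+ + 1\<close>, i.e. \<open>n\<^sup>+ m \<equiv> -1 (mod n)\<close>, so \<open>n\<^sup>+ = n - d\<close>.
  For \<open>i < n\<^sup>+\<close> the residue \<open>k = i m mod n\<close> is then the unique \<open>k < n\<close> with
  \<open>n | k n\<^sup>+ + i\<close>; hence \<open>j \<mapsto> j n mod n\<^sup>+\<close> maps the \<open>j\<close> with \<open>j n < \<ell> n\<^sup>+\<close> bijectively
  onto the positions \<open>i < n\<^sup>+\<close> carrying an \<open>L\<close>, which therefore number \<open>\<lceil>\<ell> n\<^sup>+/n\<rceil>\<close>.
  Since \<open>i \<mapsto> i m mod n\<close> permutes the residues, a full period contains exactly \<open>\<ell>\<close> letters \<open>L\<close>,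
  and the count on the remaining \<open>n\<^sup>-\<close> positions is \<open>\<ell> - \<lceil>\<ell> n\<^sup>+/n\<rceil> = \<lfloor>\<ell> n\<^sup>-/n\<rfloor>\<close>.
\<close>

lemma countL_F: "countL (F l m n) a b = card {i \<in> {a..<b}. i * m mod n < l}"
  unfolding countL_def F_def by (intro arg_cong[where f = card]) auto

lemma countL_split:
  assumes "a \<le> b" "b \<le> c"
  shows "countL S a c = countL S a b + countL S b c"
proof -
  have "{i \<in> {a..<c}. S i = L} = {i \<in> {a..<b}. S i = L} \<union> {i \<in> {b..<c}. S i = L}"
    using assms by auto
  then show ?thesis
    unfolding countL_def by (simp add: card_Un_disjoint disjoint_iff)
qed

lemma farey_roots_det:
  assumes "farey_roots m n mm nm mp np"
  shows "mp * n = m * np + 1"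
proof -
  from assms have n: "n = nm + np" and m: "m = mm + mp"
    and det: "int mp * int nm - int mm * int np = 1"
    unfolding farey_roots_def by auto
  from det have "int mp * (int nm + int np) = (int mm + int mp) * int np + 1"
    by (simp add: algebra_simps)
  then have "int (mp * n) = int (m * np + 1)"
    unfolding n m by simp
  then show ?thesis
    by (simp only: of_nat_eq_iff)
qed

lemma coprime_if_dvd_mult_Suc:
  fixes n a b :: nat
  assumes "n dvd a * b + 1"
  shows "coprime n b"
proof (rule coprimeI)
  fix c assume "c dvd n" "c dvd b"
  then have "c dvd a * b + 1" "c dvd a * b"
    using assms by auto
  then show "c dvd 1"
    by (metis dvd_add_right_iff)
qed

lemma eq_diff_if_dvd_mult_Suc:
  fixes n m d p :: nat
  assumes "[d * m = 1] (mod n)" "n dvd m * p + 1" "0 < d" "d < n" "p < n"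
  shows "p = n - d"
proof -
  have "[d * m * p + d = 1 * p + d] (mod n)"
    using assms(1) by (intro cong_add cong_mult cong_refl)
  moreover have "n dvd d * m * p + d"
    using dvd_mult[OF assms(2), of d] by (simp add: algebra_simps)
  ultimately have "n dvd p + d"
    by (simp add: cong_dvd_iff)
  then obtain k where k: "p + d = n * k"
    by blast
  have "0 < n * k" "n * k < n * 2"
    using k assms(3-5) by linarith+
  then have "k = 1"
    by simp
  then show ?thesis
    using k by simp
qed

lemma cong_mult_Suc_iff:
  fixes n m p i k :: nat
  assumes "n dvd m * p + 1"
  shows "[k * p + i = 0] (mod n) \<longleftrightarrow> [k = i * m] (mod n)"
proof -
  have i: "[i * (m * p + 1) = 0] (mod n)"
    using dvd_mult[OF assms, of i] by (simp only: cong_0_iff)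
  have "[k * p + i = 0] (mod n) \<longleftrightarrow> [k * p + i = i * m * p + i] (mod n)"
    using i by (simp add: algebra_simps) (meson cong_sym cong_trans)
  also have "\<dots> \<longleftrightarrow> [k * p = i * m * p] (mod n)"
    by (simp add: cong_add_rcancel_nat)
  also have "\<dots> \<longleftrightarrow> [k = i * m] (mod n)"
    using coprime_if_dvd_mult_Suc[OF assms] by (simp add: cong_mult_rcancel_nat coprime_commute)
  finally show ?thesis .
qed

lemma inj_on_mult_mod:
  fixes k n :: nat
  assumes "coprime k n"
  shows "inj_on (\<lambda>i. i * k mod n) {..<n}"
proof
  fix a b assume "a \<in> {..<n}" "b \<in> {..<n}" "a * k mod n = b * k mod n"
  then have "[a = b] (mod n)"
    using cong_mult_rcancel_nat[OF assms] by (simp add: cong_def)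
  then show "a = b"
    using \<open>a \<in> {..<n}\<close> \<open>b \<in> {..<n}\<close> by (simp add: cong_def)
qed

lemma image_mult_mod_multiples_below:
  fixes n m p l :: nat
  assumes "0 < p" "l \<le> n" "n dvd m * p + 1"
  shows "(\<lambda>j. j * n mod p) ` {j. j * n < l * p} = {i \<in> {0..<p}. i * m mod n < l}"
proof (intro equalityI subsetI)
  fix i assume "i \<in> (\<lambda>j. j * n mod p) ` {j. j * n < l * p}"
  then obtain j where j: "j * n < l * p" and i: "i = j * n mod p"
    by auto
  define k where "k = j * n div p"
  have jn: "k * p + i = j * n"
    unfolding i k_def by (rule div_mult_mod_eq)
  then have "k * p < l * p"
    using j by linarith
  then have "k < l"
    by simp
  have "[k * p + i = 0] (mod n)"
    unfolding jn by (simp add: cong_0_iff)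
  then have "[k = i * m] (mod n)"
    using cong_mult_Suc_iff[OF assms(3)] by blast
  then have "i * m mod n = k"
    using \<open>k < l\<close> assms(2) by (simp add: cong_def)
  then show "i \<in> {i \<in> {0..<p}. i * m mod n < l}"
    unfolding i using \<open>k < l\<close> assms(1) by simp
next
  fix i assume "i \<in> {i \<in> {0..<p}. i * m mod n < l}"
  then have i: "i < p" and kl: "i * m mod n < l"
    by auto
  define k where "k = i * m mod n"
  have "[k * p + i = 0] (mod n)"
    using cong_mult_Suc_iff[OF assms(3)] unfolding k_def by (simp add: cong_def)
  then obtain j where jn: "k * p + i = n * j"
    by (auto simp: cong_0_iff)
  have "k * p + i < (k + 1) * p"
    using i by simp
  also have "\<dots> \<le> l * p"
    using kl unfolding k_def by (intro mult_le_mono1) simp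
  finally have "j * n < l * p"
    using jn by (simp add: mult.commute)
  moreover have "j * n mod p = i"
  proof -
    have "j * n = i + k * p"
      using jn by (simp add: mult.commute)
    then show ?thesis
      using i by simp
  qed
  ultimately show "i \<in> (\<lambda>j. j * n mod p) ` {j. j * n < l * p}"
    by (intro image_eqI[of _ _ j]) auto
qed

lemma card_residues_below_eq_card_multiples:
  fixes n m p l :: nat
  assumes "0 < p" "l \<le> n" "n dvd m * p + 1"
  shows "card {i \<in> {0..<p}. i * m mod n < l} = card {j. j * n < l * p}"
proof -
  have "{j. j * n < l * p} \<subseteq> {..<p}"
  proof (intro subsetI, unfold mem_Collect_eq lessThan_iff)
    fix j assume "j * n < l * p"
    then have "j * n < n * p"
      using mult_le_mono1[OF assms(2), of p] by linarith
    then show "j < p"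
      by (simp only: mult.commute[of j] mult_less_cancel1)
  qed
  then have "inj_on (\<lambda>j. j * n mod p) {j. j * n < l * p}"
    by (rule inj_on_subset[OF inj_on_mult_mod[OF coprime_if_dvd_mult_Suc[OF assms(3)]]])
  from card_image[OF this] show ?thesis
    unfolding image_mult_mod_multiples_below[OF assms] by simp
qed

lemma card_mult_less_eq_ceiling:
  fixes n x :: nat
  assumes "0 < n"
  shows "int (card {j. j * n < x}) = \<lceil>real x / real n\<rceil>"
proof -
  let ?c = "\<lceil>real x / real n\<rceil>"
  have "j * n < x \<longleftrightarrow> real j < real x / real n" for j
    using assms by (simp add: pos_less_divide_eq flip: of_nat_mult)
  then have "j * n < x \<longleftrightarrow> j < nat ?c" for j
    by (simp add: zless_nat_eq_int_zless less_ceiling_iff)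
  then have "{j. j * n < x} = {..<nat ?c}"
    by blast
  moreover have "0 \<le> ?c"
    using ceiling_mono[of 0 "real x / real n"] by simp
  ultimately show ?thesis
    by simp
qed

lemma card_residues_below:
  fixes n m l :: nat
  assumes "coprime m n" "l \<le> n"
  shows "card {i \<in> {0..<n}. i * m mod n < l} = l"
proof -
  define f where "f i = i * m mod n" for i
  have inj: "inj_on f {0..<n}"
    unfolding f_def using inj_on_mult_mod[OF assms(1)] by (simp add: atLeast0LessThan)
  moreover have "f ` {0..<n} \<subseteq> {0..<n}"
    unfolding f_def by auto
  ultimately have onto: "f ` {0..<n} = {0..<n}"
    by (simp add: endo_inj_surj)
  have "f ` {i \<in> {0..<n}. f i < l} = {k \<in> f ` {0..<n}. k < l}"
    by blast
  also have "\<dots> = {..<l}"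
    using onto assms(2) by auto
  finally have "f ` {i \<in> {0..<n}. f i < l} = {..<l}" .
  moreover have "inj_on f {i \<in> {0..<n}. f i < l}"
    using inj by (rule inj_on_subset) auto
  ultimately have "card {i \<in> {0..<n}. f i < l} = card {..<l}"
    by (metis card_image)
  then show ?thesis
    unfolding f_def by simp
qed

lemma floor_of_int_diff:
  fixes x :: "'a::floor_ceiling"
  shows "\<lfloor>of_int k - x\<rfloor> = k - \<lceil>x\<rceil>"
  unfolding ceiling_def using floor_add_int[of "- x" k] by (simp add: algebra_simps)

theorem lemma3p7:
  fixes l m n d mm nm mp np :: nat
  assumes "0 < l" "0 < m" "l < n" "m < n" "coprime m n"
    and "d \<in> {1..n-1}" "(d * m) mod n = 1"
    and "farey_roots m n mm nm mp np"
  shows "int (countL (F l m n) 0 (n - d)) = \<lceil>real l * real np / real n\<rceil>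
       \<and> int (countL (F l m n) (n - d) n) = \<lfloor>real l * real nm / real n\<rfloor>
       \<and> \<lceil>real l * real np / real n\<rceil> + \<lfloor>real l * real nm / real n\<rfloor> = int l"
proof -
  from assms(8) have roots: "1 \<le> nm" "1 \<le> np" "nm + np = n"
    unfolding farey_roots_def by auto
  have dvd: "n dvd m * np + 1"
    using farey_roots_det[OF assms(8)] by (metis dvd_triv_right)
  have "[d * m = 1] (mod n)"
    using assms(1,3,7) by (simp add: cong_def)
  then have np: "np = n - d"
    using eq_diff_if_dvd_mult_Suc[OF _ dvd] assms(6) roots by auto
  have count_head: "int (countL (F l m n) 0 (n - d)) = \<lceil>real l * real np / real n\<rceil>"
    using card_residues_below_eq_card_multiples[OF _ _ dvd, of l] card_mult_less_eq_ceiling[of n "l * np"]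
      roots assms(3) by (simp add: countL_F np)
  have "countL (F l m n) 0 n = l"
    using card_residues_below[OF assms(5)] assms(3) by (simp add: countL_F)
  then have count_tail: "int (countL (F l m n) (n - d) n) = int l - \<lceil>real l * real np / real n\<rceil>"
    using countL_split[of 0 "n - d" n "F l m n"] count_head by simp
  have "real n = real nm + real np"
    using roots by simp
  then have "real l * real nm / real n = real l - real l * real np / real n"
    using assms(3) by (simp add: field_simps)
  then have "\<lfloor>real l * real nm / real n\<rfloor> = int l - \<lceil>real l * real np / real n\<rceil>"
    using floor_of_int_diff[of "int l"] by simp
  then show ?thesis
    using count_head count_tail by simp
qed

end
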